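(* Assume Assumption A. Let $\{\mathscr F_1,\dots,\mathscr F_{\mathfrak p},\Delta_{\mathscr F}\}$, $\mathfrak p\ge2$, be a partition of $E$ and $\beta^-_N,\beta_N$ positive sequences with $\beta^-_N/\beta_N\to0$ satisfying (H0)–(H3) with $(a_N,b_N)=(\beta^-_N,\beta_N)$. Let $X_{\mathscr F}$ be the Markov chain on $P=\{1,\dots,\mathfrak p\}$ with rates $r_{\mathscr F}(x,y)$ from (H1), $G_1,\dots,G_{\mathfrak q}$ its recurrent classes, $\mathscr G_a=\bigcup_{x\in G_a}\mathscr F_x$, $\breve{\mathscr G}_a=\bigcup_{b\ne a}\mathscr G_b$, assume $\mathfrak q>1$ and set $1/\beta^+_N=\sum_{a=1}^{\mathfrak q}\mathrm{Cap}_N(\mathscr G_a,\breve{\mathscr G}_a)/\mu_N(\mathscr G_a)$. Then $\lim_{N\to\infty}\beta_N/\beta^+_N=0$.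
   Context: Setting: $E$ is a fixed finite set. For each $N\ge1$, $(\eta^N_t)$ is a continuous-time irreducible Markov chain on $E$ with jump rates $R_N(\eta,\xi)$, holding rates $\lambda_N(\eta)=\sum_{\xi\neq\eta}R_N(\eta,\xi)$ and unique invariant probability $\mu_N$; $\mathbb P_\eta,\mathbb E_\eta$ law/expectation from $\eta$. $H_A=\inf\{t>0:\eta^N_t\in A\}$, $H^+_A=\inf\{t>\tau_1:\eta^N_t\in A\}$, $\tau_1$ first jump time; $\mathrm{Cap}_N(A,B)=\sum_{\eta\in A}\mu_N(\eta)\lambda_N(\eta)\mathbb P_\eta[H_B<H^+_A]$, $\mathrm{Cap}_N(\eta,\xi)=\mathrm{Cap}_N(\{\eta\},\{\xi\})$. The trace on nonempty $F\subset E$ is $\eta^F_t=\eta^N_{S_F(t)}$, $S_F(t)=\sup\{s:\int_0^s\mathbf 1\{\eta^N_r\in F\}dr\le t\}$, with jump rates $R^F_N$. Ordered families: a finite family of sequences of positive reals $(a^r_N)$, $r\in\mathfrak R$, is ordered if for all $r\neq s$, $\arctan(a^r_N/a^s_N)$ converges. Assumption A: (i) for each $\eta\neq\xi$, either $R_N(\eta,\xi)=0$ for all $N$ or $>0$ for all $N$; $\mathbb B$ is the set of pairs with positive rates; (ii) for every $m\ge1$ the family $\prod_{(\eta,\xi)\in\mathbb B}R_N(\eta,\xi)^{k(\eta,\xi)}$, $k:\mathbb B\to\mathbb Z_+$, $\sum k=m$, is ordered. Conditions for a partition $\{\mathscr F_1,\dots,\mathscr F_{\mathfrak p},\Delta_{\mathscr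 F}\}$ (independent of $N$) and $(a_N,b_N)$, with $\mathscr F=\bigcup_x\mathscr F_x$ and $r^{\mathscr F}_N(\mathscr F_x,\mathscr F_y)=\mu_N(\mathscr F_x)^{-1}\sum_{\eta\in\mathscr F_x}\mu_N(\eta)\sum_{\xi\in\mathscr F_y}R^{\mathscr F}_N(\eta,\xi)$: (H0) for each $x$, $\eta\in\mathscr F_x$, $\lim_N\mu_N(\eta)/\mu_N(\mathscr F_x)\in(0,1]$ exists; (H1) for $x\ne y$, $r_{\mathscr F}(x,y):=\lim_Nb_Nr^{\mathscr F}_N(\mathscr F_x,\mathscr F_y)\in[0,\infty)$ exists, and $\sum_x\sum_{y\ne x}r_{\mathscr F}(x,y)>0$; (H2) for $|\mathscr F_x|\ge2$, $\eta\ne\xi\in\mathscr F_x$: $\liminf_Na_N\mathrm{Cap}_N(\eta,\xi)/\mu_N(\mathscr F_x)>0$; (H3) for every $t>0$, $\lim_N\max_\eta\mathbb E_\eta[\int_0^t\mathbf 1\{\eta^N_{sb_N}\in\Delta_{\mathscr F}\}ds]=0$. *)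

theory Defs
  imports "HOL-Analysis.Analysis"
begin

text \<open>Finite state space: a type of class finite. Rates R :: 'e => 'e => real
  (diagonal values are ignored).\<close>

definition hold_rate :: "('e::finite \<Rightarrow> 'e \<Rightarrow> real) \<Rightarrow> 'e \<Rightarrow> real" where
  "hold_rate R \<eta> = (\<Sum>\<xi>\<in>UNIV - {\<eta>}. R \<eta> \<xi>)"

definition jump_prob :: "('e::finite \<Rightarrow> 'e \<Rightarrow> real) \<Rightarrow> 'e \<Rightarrow> 'e \<Rightarrow> real" where
  "jump_prob R \<eta> \<xi> = (if \<xi> = \<eta> then 0 else R \<eta> \<xi> / hold_rate R \<eta>)"

text \<open>hit_step R A B n z: probability, for the jump chain started at z, that the
  n-th jump lands in B - A and jumps 1..n-1 land outside A \<union> B.\<close>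
fun hit_step :: "('e::finite \<Rightarrow> 'e \<Rightarrow> real) \<Rightarrow> 'e set \<Rightarrow> 'e set \<Rightarrow> nat \<Rightarrow> 'e \<Rightarrow> real" where
  "hit_step R A B 0 z = 0"
| "hit_step R A B (Suc 0) z = (\<Sum>\<xi>\<in>B - A. jump_prob R z \<xi>)"
| "hit_step R A B (Suc (Suc n)) z =
     (\<Sum>\<xi>\<in>- (A \<union> B). jump_prob R z \<xi> * hit_step R A B (Suc n) \<xi>)"

text \<open>escape_prob R eta A B = P_eta[H_B < H^+_A] (for disjoint A, B, eta not in B).\<close>
definition escape_prob :: "('e::finite \<Rightarrow> 'e \<Rightarrow> real) \<Rightarrow> 'e \<Rightarrow> 'e set \<Rightarrow> 'e set \<Rightarrow> real" where
  "escape_prob R \<eta> A B = (\<Sum>n. hit_step R A B n \<eta>)"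

definition cap :: "('e::finite \<Rightarrow> real) \<Rightarrow> ('e \<Rightarrow> 'e \<Rightarrow> real) \<Rightarrow> 'e set \<Rightarrow> 'e set \<Rightarrow> real" where
  "cap \<mu> R A B = (\<Sum>\<eta>\<in>A. \<mu> \<eta> * hold_rate R \<eta> * escape_prob R \<eta> A B)"

text \<open>Jump rates of the trace process on F: R^F(eta,xi) = lambda(eta) P_eta[H^+_F = H_xi].\<close>
definition trace_rate :: "('e::finite \<Rightarrow> 'e \<Rightarrow> real) \<Rightarrow> 'e set \<Rightarrow> 'e \<Rightarrow> 'e \<Rightarrow> real" where
  "trace_rate R F \<eta> \<xi> = hold_rate R \<eta> * escape_prob R \<eta> (F - {\<xi>}) {\<xi>}"

definition gen_matrix :: "('e::finite \<Rightarrow> 'e \<Rightarrow> real) \<Rightarrow> 'e \<Rightarrow> 'e \<Rightarrow> real" where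
  "gen_matrix R \<eta> \<xi> = (if \<eta> = \<xi> then - hold_rate R \<eta> else R \<eta> \<xi>)"

fun mpow :: "('e::finite \<Rightarrow> 'e \<Rightarrow> real) \<Rightarrow> nat \<Rightarrow> 'e \<Rightarrow> 'e \<Rightarrow> real" where
  "mpow M 0 = (\<lambda>\<eta> \<xi>. if \<eta> = \<xi> then 1 else 0)"
| "mpow M (Suc n) = (\<lambda>\<eta> \<xi>. \<Sum>\<zeta>\<in>UNIV. mpow M n \<eta> \<zeta> * M \<zeta> \<xi>)"

text \<open>Transition semigroup p_t = exp(t L): semigroup R t eta xi = P_eta[eta_t = xi].\<close>
definition semigroup :: "('e::finite \<Rightarrow> 'e \<Rightarrow> real) \<Rightarrow> real \<Rightarrow> 'e \<Rightarrow> 'e \<Rightarrow> real" where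
  "semigroup R t \<eta> \<xi> = (\<Sum>n. t ^ n / fact n * mpow (gen_matrix R) n \<eta> \<xi>)"

definition markov_setting :: "(nat \<Rightarrow> 'e::finite \<Rightarrow> 'e \<Rightarrow> real) \<Rightarrow> (nat \<Rightarrow> 'e \<Rightarrow> real) \<Rightarrow> bool" where
  "markov_setting R \<mu> \<longleftrightarrow> (\<forall>N\<ge>1.
      (\<forall>\<eta> \<xi>. \<eta> \<noteq> \<xi> \<longrightarrow> R N \<eta> \<xi> \<ge> 0)
    \<and> (\<forall>\<eta> \<xi>. (\<eta>, \<xi>) \<in> {(a, b). a \<noteq> b \<and> R N a b > 0}\<^sup>*)
    \<and> (\<forall>\<eta>. \<mu> N \<eta> \<ge> 0) \<and> (\<Sum>\<eta>\<in>UNIV. \<mu> N \<eta>) = 1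
    \<and> (\<forall>\<xi>. (\<Sum>\<eta>\<in>UNIV. \<mu> N \<eta> * gen_matrix (R N) \<eta> \<xi>) = 0))"

definition ordered_family :: "'i set \<Rightarrow> ('i \<Rightarrow> nat \<Rightarrow> real) \<Rightarrow> bool" where
  "ordered_family I a \<longleftrightarrow> (\<forall>r\<in>I. \<forall>s\<in>I. r \<noteq> s \<longrightarrow> convergent (\<lambda>N. arctan (a r N / a s N)))"

definition positive_pairs :: "(nat \<Rightarrow> 'e \<Rightarrow> 'e \<Rightarrow> real) \<Rightarrow> ('e \<times> 'e) set" where
  "positive_pairs R = {(\<eta>, \<xi>). \<eta> \<noteq> \<xi> \<and> (\<forall>N\<ge>1. R N \<eta> \<xi> > 0)}"

definition assumption_A :: "(nat \<Rightarrow> 'e::finite \<Rightarrow> 'e \<Rightarrow> real) \<Rightarrow> bool" where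
  "assumption_A R \<longleftrightarrow>
     (\<forall>\<eta> \<xi>. \<eta> \<noteq> \<xi> \<longrightarrow> (\<forall>N\<ge>1. R N \<eta> \<xi> = 0) \<or> (\<forall>N\<ge>1. R N \<eta> \<xi> > 0))
   \<and> (\<forall>m\<ge>1. ordered_family
        {k :: 'e \<times> 'e \<Rightarrow> nat. (\<forall>p. p \<notin> positive_pairs R \<longrightarrow> k p = 0)
                             \<and> (\<Sum>p\<in>positive_pairs R. k p) = m}
        (\<lambda>k N. \<Prod>p\<in>positive_pairs R. R N (fst p) (snd p) ^ k p))"

definition is_partition :: "(nat \<Rightarrow> 'e set) \<Rightarrow> nat \<Rightarrow> 'e set \<Rightarrow> bool" where
  "is_partition \<F> p \<Delta> \<longleftrightarrow>
     (\<forall>x\<in>{1..p}. \<F> x \<noteq> {})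
   \<and> (\<forall>x\<in>{1..p}. \<forall>y\<in>{1..p}. x \<noteq> y \<longrightarrow> \<F> x \<inter> \<F> y = {})
   \<and> (\<forall>x\<in>{1..p}. \<F> x \<inter> \<Delta> = {})
   \<and> (\<Union>x\<in>{1..p}. \<F> x) \<union> \<Delta> = UNIV"

definition reduced_rate :: "('e::finite \<Rightarrow> real) \<Rightarrow> ('e \<Rightarrow> 'e \<Rightarrow> real) \<Rightarrow> 'e set \<Rightarrow> 'e set \<Rightarrow> 'e set \<Rightarrow> real" where
  "reduced_rate \<mu> R F Fx Fy =
     (\<Sum>\<eta>\<in>Fx. \<mu> \<eta> * (\<Sum>\<xi>\<in>Fy. trace_rate R F \<eta> \<xi>)) / sum \<mu> Fx"

definition H0 :: "(nat \<Rightarrow> 'e::finite \<Rightarrow> real) \<Rightarrow> (nat \<Rightarrow> 'e set) \<Rightarrow> nat \<Rightarrow> bool" where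
  "H0 \<mu> \<F> p \<longleftrightarrow> (\<forall>x\<in>{1..p}. \<forall>\<eta>\<in>\<F> x. \<exists>L. 0 < L \<and> L \<le> 1 \<and>
       (\<lambda>N. \<mu> N \<eta> / sum (\<mu> N) (\<F> x)) \<longlonglongrightarrow> L)"

definition H1 :: "(nat \<Rightarrow> 'e::finite \<Rightarrow> real) \<Rightarrow> (nat \<Rightarrow> 'e \<Rightarrow> 'e \<Rightarrow> real) \<Rightarrow> (nat \<Rightarrow> 'e set) \<Rightarrow> nat
                   \<Rightarrow> (nat \<Rightarrow> real) \<Rightarrow> (nat \<Rightarrow> nat \<Rightarrow> real) \<Rightarrow> bool" where
  "H1 \<mu> R \<F> p b r \<longleftrightarrow>
     (\<forall>x\<in>{1..p}. \<forall>y\<in>{1..p}. x \<noteq> y \<longrightarrow>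
        (\<lambda>N. b N * reduced_rate (\<mu> N) (R N) (\<Union>z\<in>{1..p}. \<F> z) (\<F> x) (\<F> y)) \<longlonglongrightarrow> r x y)
   \<and> (\<Sum>x\<in>{1..p}. \<Sum>y\<in>{1..p} - {x}. r x y) > 0"

definition H2 :: "(nat \<Rightarrow> 'e::finite \<Rightarrow> real) \<Rightarrow> (nat \<Rightarrow> 'e \<Rightarrow> 'e \<Rightarrow> real) \<Rightarrow> (nat \<Rightarrow> 'e set) \<Rightarrow> nat
                   \<Rightarrow> (nat \<Rightarrow> real) \<Rightarrow> bool" where
  "H2 \<mu> R \<F> p a \<longleftrightarrow>
     (\<forall>x\<in>{1..p}. card (\<F> x) \<ge> 2 \<longrightarrow> (\<forall>\<eta>\<in>\<F> x. \<forall>\<xi>\<in>\<F> x. \<eta> \<noteq> \<xi> \<longrightarrow>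
        liminf (\<lambda>N. ereal (a N * cap (\<mu> N) (R N) {\<eta>} {\<xi>} / sum (\<mu> N) (\<F> x))) > 0))"

definition H3 :: "(nat \<Rightarrow> 'e::finite \<Rightarrow> 'e \<Rightarrow> real) \<Rightarrow> 'e set \<Rightarrow> (nat \<Rightarrow> real) \<Rightarrow> bool" where
  "H3 R \<Delta> b \<longleftrightarrow> (\<forall>t>0.
     (\<lambda>N. Max (range (\<lambda>\<eta>. integral {0..t}
            (\<lambda>s. \<Sum>\<xi>\<in>\<Delta>. semigroup (R N) (s * b N) \<eta> \<xi>)))) \<longlonglongrightarrow> 0)"

definition chain_reach :: "nat set \<Rightarrow> (nat \<Rightarrow> nat \<Rightarrow> real) \<Rightarrow> nat \<Rightarrow> nat \<Rightarrow> bool" where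
  "chain_reach P r x y \<longleftrightarrow> (x, y) \<in> {(a, b). a \<in> P \<and> b \<in> P \<and> a \<noteq> b \<and> r a b > 0}\<^sup>*"

definition recurrent_classes :: "nat set \<Rightarrow> (nat \<Rightarrow> nat \<Rightarrow> real) \<Rightarrow> nat set set" where
  "recurrent_classes P r = {G. \<exists>x\<in>P. (\<forall>y\<in>P. chain_reach P r x y \<longrightarrow> chain_reach P r y x)
                                 \<and> G = {y\<in>P. chain_reach P r x y}}"

end

theory Submission
  imports Defs
begin

text \<open>
  A recurrent class \<open>G\<close> of the reduced chain is closed, so every limiting rate
  \<open>r x y\<close> leaving \<open>G\<close> vanishes. A path from \<open>\<G> = (\<Union>x\<in>G. \<F> x)\<close> that reaches
  another class before returning to \<open>\<G>\<close> must first return to \<open>\<F>\<close> at a state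
  outside \<open>\<G>\<close>. Hence the capacity divided by \<open>\<mu>(\<G>)\<close> is at most
  \<open>\<Sum>x\<in>G. \<Sum>y\<notin>G. r\<^sup>\<F>(\<F> x, \<F> y)\<close>, and after multiplication by \<open>\<beta>\<close> this
  tends to \<open>\<Sum>x\<in>G. \<Sum>y\<notin>G. r x y = 0\<close> by (H1).
\<close>

definition nonneg_rates :: "('e \<Rightarrow> 'e \<Rightarrow> real) \<Rightarrow> bool" where
  "nonneg_rates R \<longleftrightarrow> (\<forall>\<eta> \<xi>. \<eta> \<noteq> \<xi> \<longrightarrow> R \<eta> \<xi> \<ge> 0)"

lemma hold_rate_nonneg: "nonneg_rates R \<Longrightarrow> hold_rate R \<eta> \<ge> 0"
  unfolding hold_rate_def nonneg_rates_def by (intro sum_nonneg) auto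

lemma jump_prob_nonneg: "nonneg_rates R \<Longrightarrow> jump_prob R \<eta> \<xi> \<ge> 0"
  unfolding jump_prob_def using hold_rate_nonneg[of R \<eta>] by (auto simp: nonneg_rates_def)

lemma sum_jump_prob_le_1:
  assumes R: "nonneg_rates R"
  shows "(\<Sum>\<xi>\<in>S. jump_prob R \<eta> \<xi>) \<le> 1"
proof -
  have "(\<Sum>\<xi>\<in>S. jump_prob R \<eta> \<xi>) \<le> (\<Sum>\<xi>\<in>UNIV. jump_prob R \<eta> \<xi>)"
    by (rule sum_mono2) (auto intro: jump_prob_nonneg[OF R])
  also have "\<dots> = (\<Sum>\<xi>\<in>UNIV - {\<eta>}. R \<eta> \<xi> / hold_rate R \<eta>)"
    unfolding jump_prob_def by (rule sum.mono_neutral_cong_right) auto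
  also have "\<dots> = hold_rate R \<eta> / hold_rate R \<eta>"
    unfolding hold_rate_def by (simp add: sum_divide_distrib[symmetric])
  also have "\<dots> \<le> 1"
    by (cases "hold_rate R \<eta> = 0") auto
  finally show ?thesis .
qed

lemma hit_step_nonneg: "nonneg_rates R \<Longrightarrow> hit_step R A B n z \<ge> 0"
  by (induction R A B n z rule: hit_step.induct)
     (auto intro!: sum_nonneg mult_nonneg_nonneg jump_prob_nonneg)

definition escape_within :: "('e::finite \<Rightarrow> 'e \<Rightarrow> real) \<Rightarrow> 'e set \<Rightarrow> 'e set \<Rightarrow> nat \<Rightarrow> 'e \<Rightarrow> real" where
  "escape_within R A B K z = (\<Sum>k<K. hit_step R A B (Suc k) z)"

lemma escape_within_eq_partial_sum:
  "escape_within R A B K z = (\<Sum>n<Suc K. hit_step R A B n z)"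
  unfolding escape_within_def by (subst sum.lessThan_Suc_shift) simp

lemma escape_within_Suc:
  "escape_within R A B (Suc K) z = (\<Sum>\<xi>\<in>B - A. jump_prob R z \<xi>)
     + (\<Sum>\<xi>\<in>- (A \<union> B). jump_prob R z \<xi> * escape_within R A B K \<xi>)"
proof -
  have "escape_within R A B (Suc K) z
      = hit_step R A B (Suc 0) z + (\<Sum>k<K. hit_step R A B (Suc (Suc k)) z)"
    unfolding escape_within_def by (subst sum.lessThan_Suc_shift) simp
  also have "(\<Sum>k<K. hit_step R A B (Suc (Suc k)) z)
      = (\<Sum>\<xi>\<in>- (A \<union> B). jump_prob R z \<xi> * escape_within R A B K \<xi>)"
    unfolding escape_within_def by (simp add: sum_distrib_left sum.swap[of _ "{..<K}"])
  finally show ?thesis by simp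
qed

lemma escape_within_le_1:
  assumes R: "nonneg_rates R"
  shows "escape_within R A B K z \<le> 1"
proof (induction K arbitrary: z)
  case 0
  then show ?case by (simp add: escape_within_def)
next
  case (Suc K)
  have "(\<Sum>\<xi>\<in>- (A \<union> B). jump_prob R z \<xi> * escape_within R A B K \<xi>)
      \<le> (\<Sum>\<xi>\<in>- (A \<union> B). jump_prob R z \<xi>)"
    by (intro sum_mono) (simp add: Suc.IH jump_prob_nonneg[OF R] mult_left_le)
  moreover have "(\<Sum>\<xi>\<in>B - A. jump_prob R z \<xi>) + (\<Sum>\<xi>\<in>- (A \<union> B). jump_prob R z \<xi>)
      = (\<Sum>\<xi>\<in>(B - A) \<union> - (A \<union> B). jump_prob R z \<xi>)"
    by (subst sum.union_disjoint) auto
  moreover have "\<dots> \<le> 1"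
    by (rule sum_jump_prob_le_1[OF R])
  ultimately show ?case
    unfolding escape_within_Suc by linarith
qed

lemma summable_hit_step:
  assumes R: "nonneg_rates R"
  shows "summable (\<lambda>n. hit_step R A B n z)"
proof (rule summableI_nonneg_bounded[where x = 1])
  show "0 \<le> hit_step R A B n z" for n
    by (rule hit_step_nonneg[OF R])
  show "(\<Sum>n<K. hit_step R A B n z) \<le> 1" for K
  proof (cases K)
    case (Suc K')
    then show ?thesis
      using escape_within_le_1[OF R, of A B K' z] by (simp only: escape_within_eq_partial_sum)
  qed simp
qed

lemma escape_within_tendsto:
  assumes R: "nonneg_rates R"
  shows "(\<lambda>K. escape_within R A B K z) \<longlonglongrightarrow> escape_prob R z A B"
proof -
  have "(\<lambda>K. \<Sum>n<K. hit_step R A B n z) \<longlonglongrightarrow> escape_prob R z A B"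
    unfolding escape_prob_def by (rule summable_LIMSEQ[OF summable_hit_step[OF R]])
  then show ?thesis
    unfolding escape_within_eq_partial_sum by (rule LIMSEQ_Suc)
qed

lemma escape_prob_nonneg: "nonneg_rates R \<Longrightarrow> escape_prob R z A B \<ge> 0"
  unfolding escape_prob_def by (intro suminf_nonneg summable_hit_step hit_step_nonneg)

text \<open>
  \<open>escape_within R (F - {\<zeta>}) {\<zeta>} K z\<close> is the probability that the jump chain returns
  to \<open>F\<close> within \<open>K\<close> jumps, first at \<open>\<zeta>\<close>. A path reaching \<open>B\<close> before \<open>A\<close> either
  jumps into \<open>F - A\<close> at once, or leaves \<open>F\<close> and then, by induction, first returns to
  \<open>F\<close> outside \<open>A\<close>.
\<close>
lemma escape_within_le_sum_first_return:
  assumes R: "nonneg_rates R" and AF: "A \<subseteq> F" and BF: "B \<subseteq> F"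
  shows "escape_within R A B K z \<le> (\<Sum>\<zeta>\<in>F - A. escape_within R (F - {\<zeta>}) {\<zeta>} K z)"
proof (induction K arbitrary: z)
  case 0
  then show ?case by (simp add: escape_within_def)
next
  case (Suc K)
  let ?P = "jump_prob R z"
  let ?ret = "\<lambda>\<xi>. \<Sum>\<zeta>\<in>F - A. escape_within R (F - {\<zeta>}) {\<zeta>} K \<xi>"
  have split_outside: "(\<Sum>\<xi>\<in>- (A \<union> B). ?P \<xi> * escape_within R A B K \<xi>)
      = (\<Sum>\<xi>\<in>F - (A \<union> B). ?P \<xi> * escape_within R A B K \<xi>)
        + (\<Sum>\<xi>\<in>- F. ?P \<xi> * escape_within R A B K \<xi>)"
  proof -
    have "- (A \<union> B) = (F - (A \<union> B)) \<union> - F"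
      using AF BF by auto
    then show ?thesis
      by (simp only:) (rule sum.union_disjoint, auto)
  qed
  have split_inside: "(\<Sum>\<xi>\<in>F - A. ?P \<xi>) = (\<Sum>\<xi>\<in>B - A. ?P \<xi>) + (\<Sum>\<xi>\<in>F - (A \<union> B). ?P \<xi>)"
  proof -
    have "F - A = (B - A) \<union> (F - (A \<union> B))"
      using BF by auto
    then show ?thesis
      by (simp only:) (rule sum.union_disjoint, auto)
  qed
  have "(\<Sum>\<xi>\<in>F - (A \<union> B). ?P \<xi> * escape_within R A B K \<xi>) \<le> (\<Sum>\<xi>\<in>F - (A \<union> B). ?P \<xi>)"
    by (intro sum_mono) (simp add: escape_within_le_1[OF R] jump_prob_nonneg[OF R] mult_left_le)
  moreover have "(\<Sum>\<xi>\<in>- F. ?P \<xi> * escape_within R A B K \<xi>) \<le> (\<Sum>\<xi>\<in>- F. ?P \<xi> * ?ret \<xi>)"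
    by (intro sum_mono mult_left_mono Suc.IH jump_prob_nonneg[OF R])
  moreover have "escape_within R (F - {\<zeta>}) {\<zeta>} (Suc K) z
      = ?P \<zeta> + (\<Sum>\<xi>\<in>- F. ?P \<xi> * escape_within R (F - {\<zeta>}) {\<zeta>} K \<xi>)"
    if "\<zeta> \<in> F - A" for \<zeta>
  proof -
    have "{\<zeta>} - (F - {\<zeta>}) = {\<zeta>}" and "- ((F - {\<zeta>}) \<union> {\<zeta>}) = - F"
      using that by auto
    then show ?thesis
      unfolding escape_within_Suc by simp
  qed
  then have "(\<Sum>\<zeta>\<in>F - A. escape_within R (F - {\<zeta>}) {\<zeta>} (Suc K) z)
      = (\<Sum>\<xi>\<in>F - A. ?P \<xi>) + (\<Sum>\<xi>\<in>- F. ?P \<xi> * ?ret \<xi>)"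
    by (simp add: sum.distrib sum_distrib_left sum.swap[of _ "F - A"])
  ultimately show ?case
    unfolding escape_within_Suc[of R A B] split_outside split_inside by linarith
qed

lemma escape_prob_le_sum_first_return:
  assumes R: "nonneg_rates R" and "A \<subseteq> F" and "B \<subseteq> F"
  shows "escape_prob R z A B \<le> (\<Sum>\<zeta>\<in>F - A. escape_prob R z (F - {\<zeta>}) {\<zeta>})"
proof (rule LIMSEQ_le[OF escape_within_tendsto[OF R]])
  show "(\<lambda>K. \<Sum>\<zeta>\<in>F - A. escape_within R (F - {\<zeta>}) {\<zeta>} K z)
      \<longlonglongrightarrow> (\<Sum>\<zeta>\<in>F - A. escape_prob R z (F - {\<zeta>}) {\<zeta>})"
    by (intro tendsto_sum escape_within_tendsto[OF R])
  show "\<exists>N. \<forall>K\<ge>N. escape_within R A B K z \<le> (\<Sum>\<zeta>\<in>F - A. escape_within R (F - {\<zeta>}) {\<zeta>} K z)"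
    using escape_within_le_sum_first_return[OF assms] by blast
qed

lemma cap_nonneg:
  "nonneg_rates R \<Longrightarrow> \<forall>\<eta>. \<mu> \<eta> \<ge> 0 \<Longrightarrow> cap \<mu> R A B \<ge> 0"
  unfolding cap_def by (intro sum_nonneg mult_nonneg_nonneg hold_rate_nonneg escape_prob_nonneg) auto

lemma reduced_rate_nonneg:
  "nonneg_rates R \<Longrightarrow> \<forall>\<eta>. \<mu> \<eta> \<ge> 0 \<Longrightarrow> reduced_rate \<mu> R F Fx Fy \<ge> 0"
  unfolding reduced_rate_def trace_rate_def
  by (intro divide_nonneg_nonneg sum_nonneg mult_nonneg_nonneg hold_rate_nonneg escape_prob_nonneg)
     auto

text \<open>If \<open>sum \<mu> Fx = 0\<close>, the left side is \<open>0\<close> by division by zero, the right one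
  by nonnegativity of \<open>\<mu>\<close>.\<close>
lemma sum_mult_reduced_rate:
  assumes "\<forall>\<eta>. \<mu> \<eta> \<ge> 0"
  shows "sum \<mu> Fx * reduced_rate \<mu> R F Fx Fy = (\<Sum>\<eta>\<in>Fx. \<mu> \<eta> * (\<Sum>\<xi>\<in>Fy. trace_rate R F \<eta> \<xi>))"
proof (cases "sum \<mu> Fx = 0")
  case True
  then have "\<forall>\<eta>\<in>Fx. \<mu> \<eta> = 0"
    using assms by (simp add: sum_nonneg_eq_0_iff)
  then show ?thesis
    using True by simp
qed (simp add: reduced_rate_def)

lemma UN_diff_disjoint_family:
  assumes "disjoint_family_on F P" and "G \<subseteq> P"
  shows "(\<Union>z\<in>P. F z) - (\<Union>x\<in>G. F x) = (\<Union>y\<in>P - G. F y)"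
proof
  show "(\<Union>y\<in>P - G. F y) \<subseteq> (\<Union>z\<in>P. F z) - (\<Union>x\<in>G. F x)"
  proof
    fix \<xi> assume "\<xi> \<in> (\<Union>y\<in>P - G. F y)"
    then obtain y where y: "y \<in> P - G" "\<xi> \<in> F y"
      by blast
    have "\<xi> \<notin> F x" if "x \<in> G" for x
      using disjoint_family_onD[OF assms(1), of x y] assms(2) that y by auto
    with y show "\<xi> \<in> (\<Union>z\<in>P. F z) - (\<Union>x\<in>G. F x)"
      by blast
  qed
qed blast

lemma cap_le_sum_reduced_rate:
  fixes R :: "'e::finite \<Rightarrow> 'e \<Rightarrow> real" and F :: "'i \<Rightarrow> 'e set"
  assumes R: "nonneg_rates R" and \<mu>: "\<forall>\<eta>. \<mu> \<eta> \<ge> 0"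
    and P: "finite P" and disj: "disjoint_family_on F P"
    and G: "G \<subseteq> P" and B: "B \<subseteq> (\<Union>z\<in>P. F z)"
  shows "cap \<mu> R (\<Union>x\<in>G. F x) B
      \<le> (\<Sum>x\<in>G. \<Sum>y\<in>P - G. sum \<mu> (F x) * reduced_rate \<mu> R (\<Union>z\<in>P. F z) (F x) (F y))"
proof -
  define Fs where "Fs = (\<Union>z\<in>P. F z)"
  define Gs where "Gs = (\<Union>x\<in>G. F x)"
  have "Gs \<subseteq> Fs"
    unfolding Gs_def Fs_def using G by auto
  have finite_G: "finite G" and finite_PG: "finite (P - G)"
    using P G finite_subset by auto
  have disj_G: "disjoint_family_on F G" and disj_PG: "disjoint_family_on F (P - G)"
    using disj G by (auto intro: disjoint_family_on_mono)
  have "cap \<mu> R Gs B = (\<Sum>\<eta>\<in>Gs. \<mu> \<eta> * hold_rate R \<eta> * escape_prob R \<eta> Gs B)"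
    unfolding cap_def ..
  also have "\<dots> \<le> (\<Sum>\<eta>\<in>Gs. \<mu> \<eta> * hold_rate R \<eta> * (\<Sum>\<xi>\<in>Fs - Gs. escape_prob R \<eta> (Fs - {\<xi>}) {\<xi>}))"
    using \<open>Gs \<subseteq> Fs\<close> B \<mu> hold_rate_nonneg[OF R]
    by (intro sum_mono mult_left_mono escape_prob_le_sum_first_return[OF R]) (auto simp: Fs_def)
  also have "\<dots> = (\<Sum>\<eta>\<in>Gs. \<mu> \<eta> * (\<Sum>\<xi>\<in>Fs - Gs. trace_rate R Fs \<eta> \<xi>))"
    unfolding trace_rate_def by (simp add: sum_distrib_left mult.assoc)
  also have "\<dots> = (\<Sum>x\<in>G. \<Sum>\<eta>\<in>F x. \<mu> \<eta> * (\<Sum>y\<in>P - G. \<Sum>\<xi>\<in>F y. trace_rate R Fs \<eta> \<xi>))"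
    unfolding Fs_def Gs_def UN_diff_disjoint_family[OF disj G]
    using finite_G finite_PG disj_G disj_PG
    by (simp add: sum.UNION_disjoint disjoint_family_on_def)
  also have "\<dots> = (\<Sum>x\<in>G. \<Sum>y\<in>P - G. \<Sum>\<eta>\<in>F x. \<mu> \<eta> * (\<Sum>\<xi>\<in>F y. trace_rate R Fs \<eta> \<xi>))"
    unfolding sum_distrib_left by (rule sum.cong[OF refl]) (rule sum.swap)
  also have "\<dots> = (\<Sum>x\<in>G. \<Sum>y\<in>P - G. sum \<mu> (F x) * reduced_rate \<mu> R Fs (F x) (F y))"
    by (simp add: sum_mult_reduced_rate[OF \<mu>])
  finally show ?thesis
    unfolding Fs_def Gs_def .
qed

lemma cap_div_mass_le_sum_reduced_rate:
  fixes R :: "'e::finite \<Rightarrow> 'e \<Rightarrow> real" and F :: "'i \<Rightarrow> 'e set"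
  assumes R: "nonneg_rates R" and \<mu>: "\<forall>\<eta>. \<mu> \<eta> \<ge> 0"
    and P: "finite P" and disj: "disjoint_family_on F P"
    and G: "G \<subseteq> P" and B: "B \<subseteq> (\<Union>z\<in>P. F z)"
  shows "cap \<mu> R (\<Union>x\<in>G. F x) B / sum \<mu> (\<Union>x\<in>G. F x)
      \<le> (\<Sum>x\<in>G. \<Sum>y\<in>P - G. reduced_rate \<mu> R (\<Union>z\<in>P. F z) (F x) (F y))"
    (is "?cap / ?m \<le> ?S")
proof (cases "?m = 0")
  case True
  then show ?thesis
    using reduced_rate_nonneg[OF R \<mu>] by (simp add: sum_nonneg)
next
  case False
  then have "?m > 0"
    using \<mu> by (simp add: less_le sum_nonneg)
  have "?cap \<le> (\<Sum>x\<in>G. \<Sum>y\<in>P - G. sum \<mu> (F x) * reduced_rate \<mu> R (\<Union>z\<in>P. F z) (F x) (F y))"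
    by (rule cap_le_sum_reduced_rate[OF assms])
  also have "\<dots> \<le> (\<Sum>x\<in>G. \<Sum>y\<in>P - G. ?m * reduced_rate \<mu> R (\<Union>z\<in>P. F z) (F x) (F y))"
    using \<mu> by (intro sum_mono mult_right_mono reduced_rate_nonneg[OF R \<mu>] sum_mono2) auto
  also have "\<dots> = ?m * ?S"
    by (simp add: sum_distrib_left)
  finally show ?thesis
    using \<open>?m > 0\<close> by (simp add: divide_le_eq mult.commute)
qed

lemma recurrent_class_subset: "G \<in> recurrent_classes P r \<Longrightarrow> G \<subseteq> P"
  unfolding recurrent_classes_def by auto

lemma recurrent_class_closed:
  assumes G: "G \<in> recurrent_classes P r" and x: "x \<in> G" and y: "y \<in> P - G"
  shows "r x y \<le> 0"
proof (rule ccontr)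
  assume "\<not> r x y \<le> 0"
  from G obtain x0 where G_eq: "G = {y\<in>P. chain_reach P r x0 y}"
    unfolding recurrent_classes_def by blast
  have "chain_reach P r x y"
    unfolding chain_reach_def using \<open>\<not> r x y \<le> 0\<close> x y G_eq by (intro r_into_rtrancl) auto
  with x G_eq have "chain_reach P r x0 y"
    unfolding chain_reach_def by (auto elim: rtrancl_trans)
  with y G_eq show False
    by blast
qed

lemma scaled_capacity_ratio_tendsto_0:
  fixes R :: "nat \<Rightarrow> 'e::finite \<Rightarrow> 'e \<Rightarrow> real" and F :: "'i \<Rightarrow> 'e set"
  assumes R: "\<forall>N\<ge>1. nonneg_rates (R N)" and \<mu>: "\<forall>N\<ge>1. \<forall>\<eta>. \<mu> N \<eta> \<ge> 0"
    and \<beta>: "\<forall>N\<ge>1. \<beta> N \<ge> 0"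
    and P: "finite P" and disj: "disjoint_family_on F P"
    and G: "G \<subseteq> P" and B: "B \<subseteq> (\<Union>z\<in>P. F z)"
    and lim: "\<And>x y. x \<in> G \<Longrightarrow> y \<in> P - G \<Longrightarrow>
      (\<lambda>N. \<beta> N * reduced_rate (\<mu> N) (R N) (\<Union>z\<in>P. F z) (F x) (F y)) \<longlonglongrightarrow> r x y"
    and closed: "\<And>x y. x \<in> G \<Longrightarrow> y \<in> P - G \<Longrightarrow> r x y \<le> 0"
  shows "(\<lambda>N. \<beta> N * (cap (\<mu> N) (R N) (\<Union>x\<in>G. F x) B / sum (\<mu> N) (\<Union>x\<in>G. F x))) \<longlonglongrightarrow> 0"
proof (rule tendsto_sandwich[where f = "\<lambda>_. 0"])
  let ?rate = "\<lambda>N x y. \<beta> N * reduced_rate (\<mu> N) (R N) (\<Union>z\<in>P. F z) (F x) (F y)"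
  have rate_nonneg: "\<forall>\<^sub>F N in sequentially. ?rate N x y \<ge> 0" for x y
    unfolding eventually_sequentially using R \<mu> \<beta>
    by (auto intro!: mult_nonneg_nonneg reduced_rate_nonneg)
  have "r x y = 0" if "x \<in> G" "y \<in> P - G" for x y
    using closed[OF that] tendsto_lowerbound[OF lim[OF that] rate_nonneg] by simp
  then have "(\<lambda>N. \<Sum>x\<in>G. \<Sum>y\<in>P - G. ?rate N x y) \<longlonglongrightarrow> (\<Sum>x\<in>G. \<Sum>y\<in>P - G. 0)"
    using lim by (intro tendsto_sum) auto
  then show "(\<lambda>N. \<Sum>x\<in>G. \<Sum>y\<in>P - G. ?rate N x y) \<longlonglongrightarrow> 0"
    by simp
  have "\<beta> N * (cap (\<mu> N) (R N) (\<Union>x\<in>G. F x) B / sum (\<mu> N) (\<Union>x\<in>G. F x))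
      \<le> (\<Sum>x\<in>G. \<Sum>y\<in>P - G. ?rate N x y)" if "N \<ge> 1" for N
  proof -
    have "\<beta> N * (cap (\<mu> N) (R N) (\<Union>x\<in>G. F x) B / sum (\<mu> N) (\<Union>x\<in>G. F x))
        \<le> \<beta> N * (\<Sum>x\<in>G. \<Sum>y\<in>P - G. reduced_rate (\<mu> N) (R N) (\<Union>z\<in>P. F z) (F x) (F y))"
      using that R \<mu> \<beta> by (intro mult_left_mono cap_div_mass_le_sum_reduced_rate[OF _ _ P disj G B]) auto
    also have "\<dots> = (\<Sum>x\<in>G. \<Sum>y\<in>P - G. ?rate N x y)"
      by (simp add: sum_distrib_left)
    finally show ?thesis .
  qed
  then show "\<forall>\<^sub>F N in sequentially. \<beta> N * (cap (\<mu> N) (R N) (\<Union>x\<in>G. F x) B / sum (\<mu> N) (\<Union>x\<in>G. F x))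
      \<le> (\<Sum>x\<in>G. \<Sum>y\<in>P - G. ?rate N x y)"
    unfolding eventually_sequentially by blast
  show "\<forall>\<^sub>F N in sequentially. 0 \<le> \<beta> N * (cap (\<mu> N) (R N) (\<Union>x\<in>G. F x) B / sum (\<mu> N) (\<Union>x\<in>G. F x))"
    unfolding eventually_sequentially using R \<mu> \<beta>
    by (auto intro!: mult_nonneg_nonneg divide_nonneg_nonneg cap_nonneg sum_nonneg)
qed simp

theorem mainTheorem19:
  fixes R :: "nat \<Rightarrow> 'e::finite \<Rightarrow> 'e \<Rightarrow> real"
    and \<mu> :: "nat \<Rightarrow> 'e \<Rightarrow> real"
    and \<F> :: "nat \<Rightarrow> 'e set" and p :: nat and \<Delta> :: "'e set"
    and \<beta>m \<beta> :: "nat \<Rightarrow> real" and r :: "nat \<Rightarrow> nat \<Rightarrow> real"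
  assumes setting: "markov_setting R \<mu>"
    and A: "assumption_A R"
    and p2: "p \<ge> 2"
    and part: "is_partition \<F> p \<Delta>"
    and pos: "\<forall>N\<ge>1. \<beta>m N > 0 \<and> \<beta> N > 0"
    and ratio: "(\<lambda>N. \<beta>m N / \<beta> N) \<longlonglongrightarrow> 0"
    and h0: "H0 \<mu> \<F> p"
    and h1: "H1 \<mu> R \<F> p \<beta> r"
    and h2: "H2 \<mu> R \<F> p \<beta>m"
    and h3: "H3 R \<Delta> \<beta>"
    and q: "card (recurrent_classes {1..p} r) > 1"
  shows "(\<lambda>N. \<beta> N *
           (\<Sum>G\<in>recurrent_classes {1..p} r.
              cap (\<mu> N) (R N) (\<Union>x\<in>G. \<F> x)
                  (\<Union>H\<in>recurrent_classes {1..p} r - {G}. \<Union>x\<in>H. \<F> x)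
              / sum (\<mu> N) (\<Union>x\<in>G. \<F> x))) \<longlonglongrightarrow> 0"
proof -
  let ?RC = "recurrent_classes {1..p} r"
  have R: "\<forall>N\<ge>1. nonneg_rates (R N)" and \<mu>: "\<forall>N\<ge>1. \<forall>\<eta>. \<mu> N \<eta> \<ge> 0"
    using setting unfolding markov_setting_def nonneg_rates_def by blast+
  have \<beta>: "\<forall>N\<ge>1. \<beta> N \<ge> 0"
    using pos by (simp add: less_imp_le)
  have h1_lim: "(\<lambda>N. \<beta> N * reduced_rate (\<mu> N) (R N) (\<Union>z\<in>{1..p}. \<F> z) (\<F> x) (\<F> y)) \<longlonglongrightarrow> r x y"
    if "x \<in> {1..p}" "y \<in> {1..p}" "x \<noteq> y" for x y
    using h1 that unfolding H1_def by blast
  have disj: "disjoint_family_on \<F> {1..p}"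
    using part unfolding is_partition_def disjoint_family_on_def by blast
  have "(\<lambda>N. \<beta> N * (cap (\<mu> N) (R N) (\<Union>x\<in>G. \<F> x) (\<Union>H\<in>?RC - {G}. \<Union>x\<in>H. \<F> x)
          / sum (\<mu> N) (\<Union>x\<in>G. \<F> x))) \<longlonglongrightarrow> 0" if G: "G \<in> ?RC" for G
  proof (rule scaled_capacity_ratio_tendsto_0[OF R \<mu> \<beta> _ disj recurrent_class_subset[OF G]])
    show "(\<Union>H\<in>?RC - {G}. \<Union>x\<in>H. \<F> x) \<subseteq> (\<Union>z\<in>{1..p}. \<F> z)"
      by (auto dest: recurrent_class_subset)
    show "(\<lambda>N. \<beta> N * reduced_rate (\<mu> N) (R N) (\<Union>z\<in>{1..p}. \<F> z) (\<F> x) (\<F> y)) \<longlonglongrightarrow> r x y"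
      if "x \<in> G" and "y \<in> {1..p} - G" for x y
      using that recurrent_class_subset[OF G] by (intro h1_lim) auto
  qed (use recurrent_class_closed[OF G] in auto)
  then have "(\<lambda>N. \<Sum>G\<in>?RC. \<beta> N * (cap (\<mu> N) (R N) (\<Union>x\<in>G. \<F> x) (\<Union>H\<in>?RC - {G}. \<Union>x\<in>H. \<F> x)
          / sum (\<mu> N) (\<Union>x\<in>G. \<F> x))) \<longlonglongrightarrow> 0"
    by (rule tendsto_null_sum)
  then show ?thesis
    by (simp add: sum_distrib_left)
qed

end
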